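(* Let $V=\{v_1,\dots,v_m\}\subset\mathbb{R}^d$ be a finite set of $m$ points and let $r\in\mathbb{R}^d$. Let $\mathcal{B}(V,r)$ denote the poset, ordered by inclusion, of all weakly $r$-balanced subsets $S\subset V$ with $S\neq V$, and let $\overline{\mathcal{B}}(V,r)$ denote the poset, ordered by inclusion, of all $r$-balanced subsets $S\subset V$ with $S\neq V$. Suppose $\mathcal{B}(V,r)$ is nonempty, $r\in\mathrm{relint}(\mathrm{conv}(V))$, and the affine hull of $\mathrm{conv}(V)$ has dimension $k$. Then \[ \Delta\mathcal{B}(V,r)\simeq\Delta\overline{\mathcal{B}}(V,r)\simeq S^{m-k-2}, \] where $\simeq$ denotes homotopy equivalence.
   Context: A subset $S\subset V$ is called weakly $r$-balanced if $r\in\mathrm{conv}(S)$, and $r$-balanced if $r\in\mathrm{relint}(\mathrm{conv}(S))$ (relative interior taken within the affine hull of $S$). For a poset $\mathcal{P}$, $\Delta\mathcal{P}$ denotes its order complex (the simplicial complex of finite chains of $\mathcal{P}$). *)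

theory Defs
  imports "HOL-Analysis.Analysis"
begin

definition weakly_balanced_poset :: "('a::euclidean_space) set \<Rightarrow> 'a \<Rightarrow> 'a set set" where
  "weakly_balanced_poset V r = {S. S \<subseteq> V \<and> S \<noteq> V \<and> r \<in> convex hull S}"

definition balanced_poset :: "('a::euclidean_space) set \<Rightarrow> 'a \<Rightarrow> 'a set set" where
  "balanced_poset V r = {S. S \<subseteq> V \<and> S \<noteq> V \<and> r \<in> rel_interior (convex hull S)}"

text \<open>Geometric realization of the order complex of a finite family P of sets,
  ordered by inclusion: convex combinations of the vertices (elements of P) whose
  support is a chain, topologized as a subspace of the product topology on
  functions P-indexed to the reals (which for finite P is the Euclidean topology).\<close>
definition order_complex_realization :: "'b set set \<Rightarrow> ('b set \<Rightarrow> real) topology" where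
  "order_complex_realization P = subtopology (powertop_real UNIV)
     {f. (\<forall>x. 0 \<le> f x) \<and> (\<forall>x. x \<notin> P \<longrightarrow> f x = 0)
         \<and> (\<forall>x y. f x \<noteq> 0 \<and> f y \<noteq> 0 \<longrightarrow> x \<subseteq> y \<or> y \<subseteq> x)
         \<and> sum f P = 1}"

end

theory Submission
  imports Defs
begin

(*
  Nonnegative weights l on V with (SUM v:V. l v *R (v - r)) = 0 form a polyhedral cone.  A proper
  subset of V is r-balanced iff it is the support of such a weighting, and weakly r-balanced iff it
  contains one.  Sending a weakly balanced set to its largest balanced subset is a monotone
  retraction lying below the identity, so the two order complexes are homotopy equivalent.

  Fix for each balanced S a normalised weighting b_S with support S.  A point of the order complex
  of balanced sets, i.e. weights g on a chain, is sent to (SUM S. g S * b_S); peeling off the top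
  of the chain shows that this is a homeomorphism onto the normalised weightings vanishing at some
  point of V, which form the relative boundary of the polytope of all normalised weightings.  As r
  lies in the relative interior of conv V, this polytope contains a weighting c that is positive
  on V, and it is a neighbourhood of c in c + (affine dependences of V), a space of dimension
  m - k - 1.  Radial projection from c identifies its boundary with the sphere of dimension
  m - k - 2.
*)

section \<open>Geometric realizations of order complexes\<close>

definition chain_weights :: "'b set set \<Rightarrow> ('b set \<Rightarrow> real) \<Rightarrow> bool" where
  "chain_weights P g \<longleftrightarrow> (\<forall>x. 0 \<le> g x) \<and> (\<forall>x. x \<notin> P \<longrightarrow> g x = 0)
     \<and> (\<forall>x y. g x \<noteq> 0 \<and> g y \<noteq> 0 \<longrightarrow> x \<subseteq> y \<or> y \<subseteq> x)"

definition order_complex_points :: "'b set set \<Rightarrow> ('b set \<Rightarrow> real) set" where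
  "order_complex_points P = {g. chain_weights P g \<and> sum g P = 1}"

lemma order_complex_realization_eq:
  "order_complex_realization P = subtopology (powertop_real UNIV) (order_complex_points P)"
  unfolding order_complex_realization_def order_complex_points_def chain_weights_def
  by simp

lemma chain_weights_nonneg: "chain_weights P g \<Longrightarrow> 0 \<le> g x"
  unfolding chain_weights_def by simp

lemma chain_weights_in: "chain_weights P g \<Longrightarrow> g x \<noteq> 0 \<Longrightarrow> x \<in> P"
  unfolding chain_weights_def by metis

lemma chain_weights_chain:
  "chain_weights P g \<Longrightarrow> g x \<noteq> 0 \<Longrightarrow> g y \<noteq> 0 \<Longrightarrow> x \<subseteq> y \<or> y \<subseteq> x"
  unfolding chain_weights_def by metis

lemma chain_weights_delete: "chain_weights P g \<Longrightarrow> chain_weights P (g(x := 0))"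
  unfolding chain_weights_def by auto

lemma chain_weights_mono: "chain_weights P g \<Longrightarrow> P \<subseteq> Q \<Longrightarrow> chain_weights Q g"
  unfolding chain_weights_def by (meson subsetD)

lemma finite_chain_weights_support:
  "finite P \<Longrightarrow> chain_weights P g \<Longrightarrow> finite {x. g x \<noteq> 0}"
  by (rule finite_subset[of _ P]) (auto dest: chain_weights_in)

lemma Union_finite_chain_in:
  assumes "finite F" "F \<noteq> {}" "\<And>x y. x \<in> F \<Longrightarrow> y \<in> F \<Longrightarrow> x \<subseteq> y \<or> y \<subseteq> x"
  shows "\<Union>F \<in> F"
  using assms
proof (induction F rule: finite_ne_induct)
  case (insert x F)
  then have "\<Union>F \<in> F" by blast
  moreover from insert this have "x \<subseteq> \<Union>F \<or> \<Union>F \<subseteq> x" by blast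
  ultimately show ?case by (auto simp: sup.absorb1 sup.absorb2)
qed simp

lemma chain_weights_top:
  assumes "finite P" "chain_weights P g" "g \<noteq> (\<lambda>_. 0)"
  shows "g (\<Union>{x. g x \<noteq> 0}) \<noteq> 0"
proof -
  have "\<Union>{x. g x \<noteq> 0} \<in> {x. g x \<noteq> 0}"
    using assms finite_chain_weights_support[OF assms(1,2)] chain_weights_chain[OF assms(2)]
    by (intro Union_finite_chain_in) auto
  then show ?thesis by simp
qed

lemma order_complex_point_ne_zero:
  "g \<in> order_complex_points P \<Longrightarrow> g \<noteq> (\<lambda>_. 0)"
  unfolding order_complex_points_def by auto

lemma order_complex_points_mono:
  assumes "finite P" "Q \<subseteq> P"
  shows "order_complex_points Q \<subseteq> order_complex_points P"
proof
  fix g assume "g \<in> order_complex_points Q"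
  then have g: "chain_weights Q g" "sum g Q = 1" by (auto simp: order_complex_points_def)
  have "sum g P = sum g Q"
    using assms chain_weights_in[OF g(1)] by (intro sum.mono_neutral_right) auto
  then show "g \<in> order_complex_points P"
    using g chain_weights_mono[OF g(1) assms(2)] by (simp add: order_complex_points_def)
qed

lemma continuous_map_product_coordinate:
  "continuous_map (subtopology (powertop_real UNIV) D) euclideanreal (\<lambda>g. g x)"
  using continuous_map_product_projection[of x UNIV "\<lambda>_. euclideanreal"]
  by (simp add: continuous_map_from_subtopology)

lemma closedin_coordinate_preimage:
  assumes "closed C"
  shows "closedin (powertop_real UNIV) {g. g x \<in> C}"
proof -
  have "closedin (powertop_real UNIV) {g \<in> topspace (powertop_real UNIV). g x \<in> C}"
    using assms continuous_map_product_projection[of x UNIV "\<lambda>_. euclideanreal"]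
    by (intro closedin_continuous_map_preimage) auto
  then show ?thesis by simp
qed

lemma closedin_coordinate_eq: "closedin (powertop_real UNIV) {g. g x = a}"
  using closedin_coordinate_preimage[of "{a}" x] by simp

lemma closedin_powertop_Collect_all:
  assumes "\<And>i. closedin (powertop_real UNIV) {g. Q i g}"
  shows "closedin (powertop_real UNIV) {g. \<forall>i. Q i g}"
proof -
  have "{g. \<forall>i. Q i g} = \<Inter>(range (\<lambda>i. {g. Q i g}))" by auto
  also have "closedin (powertop_real UNIV) \<dots>"
    by (rule closedin_Inter) (use assms in auto)
  finally show ?thesis .
qed

lemma closedin_order_complex_points:
  assumes "finite P"
  shows "closedin (powertop_real UNIV) (order_complex_points P)"
proof -
  let ?X = "powertop_real UNIV :: ('b set \<Rightarrow> real) topology"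
  have comparable: "closedin ?X {g. g x \<noteq> 0 \<and> g y \<noteq> 0 \<longrightarrow> x \<subseteq> y \<or> y \<subseteq> x}" for x y :: "'b set"
  proof (cases "x \<subseteq> y \<or> y \<subseteq> x")
    case False
    then have "{g. g x \<noteq> 0 \<and> g y \<noteq> 0 \<longrightarrow> x \<subseteq> y \<or> y \<subseteq> x} = {g. g x = 0} \<union> {g. g y = (0::real)}"
      by auto
    then show ?thesis by (simp add: closedin_Un closedin_coordinate_eq)
  qed (use closedin_topspace[of ?X] in simp)
  have outside: "closedin ?X {g. x \<notin> P \<longrightarrow> g x = 0}" for x
    using closedin_coordinate_eq[of x 0] closedin_topspace[of ?X] by (cases "x \<in> P") simp_all
  have "continuous_map ?X euclideanreal (\<lambda>g. sum g P)"
    using continuous_map_product_projection[of _ UNIV "\<lambda>_. euclideanreal"]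
    by (intro continuous_map_sum) (auto simp: assms)
  then have sum: "closedin ?X {g. sum g P = 1}"
    using closedin_continuous_map_preimage[of ?X euclideanreal _ "{1}"] by simp
  have "order_complex_points P = {g. \<forall>x. g x \<in> {0..}} \<inter> {g. \<forall>x. x \<notin> P \<longrightarrow> g x = 0}
      \<inter> {g. \<forall>x y. g x \<noteq> 0 \<and> g y \<noteq> 0 \<longrightarrow> x \<subseteq> y \<or> y \<subseteq> x} \<inter> {g. sum g P = 1}"
    unfolding order_complex_points_def chain_weights_def by auto
  also have "closedin ?X \<dots>"
    by (intro closedin_Int closedin_powertop_Collect_all closedin_coordinate_preimage comparable
        outside sum closed_real_atLeast)
  finally show ?thesis .
qed

lemma compact_space_order_complex_points:
  assumes "finite P"
  shows "compact_space (subtopology (powertop_real UNIV) (order_complex_points P))"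
proof -
  let ?K = "PiE UNIV (\<lambda>x. if x \<in> P then {0..1} else {0::real})"
  have "order_complex_points P \<subseteq> ?K"
  proof
    fix g assume g: "g \<in> order_complex_points P"
    then have "g x \<le> sum g P" if "x \<in> P" for x
      using that assms by (intro member_le_sum) (auto simp: order_complex_points_def chain_weights_def)
    then show "g \<in> ?K" using g by (auto simp: order_complex_points_def chain_weights_def)
  qed
  moreover have "compactin (powertop_real UNIV) ?K"
    by (subst compactin_PiE) auto
  ultimately have "compactin (powertop_real UNIV) (order_complex_points P)"
    using closed_compactin closedin_order_complex_points[OF assms] by metis
  then show ?thesis by (rule compact_space_subtopology)
qed

lemma Hausdorff_space_powertop_real_subtopology:
  "Hausdorff_space (subtopology (powertop_real UNIV) S)"
  by (metis Hausdorff_space_euclidean Hausdorff_space_product_topology Hausdorff_space_subtopology)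

section \<open>Order complexes of a family and of a lower retract\<close>

locale order_retraction =
  fixes P Q :: "'b set set" and \<rho> :: "'b set \<Rightarrow> 'b set"
  assumes finite_P: "finite P"
    and retract_subset: "Q \<subseteq> P"
    and retract_into: "x \<in> P \<Longrightarrow> \<rho> x \<in> Q"
    and retract_mono: "x \<in> P \<Longrightarrow> y \<in> P \<Longrightarrow> x \<subseteq> y \<Longrightarrow> \<rho> x \<subseteq> \<rho> y"
    and retract_below: "x \<in> P \<Longrightarrow> \<rho> x \<subseteq> x"
    and retract_id: "x \<in> Q \<Longrightarrow> \<rho> x = x"
begin

definition pushforward :: "('b set \<Rightarrow> real) \<Rightarrow> 'b set \<Rightarrow> real" where
  "pushforward g y = sum g {x \<in> P. \<rho> x = y}"

definition rank :: "'b set \<Rightarrow> nat" where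
  "rank x = card {y \<in> P. y \<subset> x}"

text \<open>The weight on \<open>x\<close> is moved to \<open>\<rho> x\<close> during the time interval
  \<open>[rank x, rank x + 1] / (card P + 1)\<close>. Thus along a chain a set only starts to move
  once all its subsets in the chain have arrived, which keeps the support a chain.\<close>

definition progress :: "real \<Rightarrow> 'b set \<Rightarrow> real" where
  "progress t x = max 0 (min 1 (t * (card P + 1) - rank x))"

definition deformation :: "real \<Rightarrow> ('b set \<Rightarrow> real) \<Rightarrow> 'b set \<Rightarrow> real" where
  "deformation t g y = g y * (1 - progress t y) + (\<Sum>x | x \<in> P \<and> \<rho> x = y. g x * progress t x)"

lemma rank_le_card: "rank x \<le> card P"
  unfolding rank_def by (rule card_mono[OF finite_P]) auto

lemma rank_strict_mono:
  assumes "x \<in> P" "x \<subset> y"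
  shows "rank x < rank y"
  unfolding rank_def using assms finite_P by (intro psubset_card_mono) auto

lemma progress_bounds: "0 \<le> progress t x" "progress t x \<le> 1"
  by (auto simp: progress_def)

lemma progress_0: "progress 0 x = 0"
  by (simp add: progress_def)

lemma progress_1: "progress 1 x = 1"
  using rank_le_card[of x] by (simp add: progress_def)

lemma progress_stagger:
  assumes "y \<in> P" "y \<subset> x" "progress t x \<noteq> 0"
  shows "progress t y = 1"
proof -
  have "real (rank y) + 1 \<le> real (rank x)"
    using rank_strict_mono[OF assms(1,2)] by linarith
  moreover have "t * (card P + 1) - rank x > 0"
    using assms(3) by (auto simp: progress_def max_def min_def split: if_splits)
  ultimately show ?thesis by (simp add: progress_def)
qed

lemma deformation_0: "deformation 0 g = g"
  by (simp add: deformation_def progress_0 fun_eq_iff)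

lemma deformation_1: "deformation 1 g = pushforward g"
  by (simp add: deformation_def progress_1 pushforward_def fun_eq_iff)

lemma sum_fibres_retract: "(\<Sum>y\<in>P. \<Sum>x | x \<in> P \<and> \<rho> x = y. f x) = sum f P"
  using retract_into retract_subset by (intro sum.group finite_P) auto

lemma deformation_support:
  assumes "deformation t g y \<noteq> 0"
  obtains "g y \<noteq> 0" "progress t y \<noteq> 1"
  | x where "x \<in> P" "\<rho> x = y" "g x \<noteq> 0" "progress t x \<noteq> 0"
proof -
  consider "g y * (1 - progress t y) \<noteq> 0" | "(\<Sum>x | x \<in> P \<and> \<rho> x = y. g x * progress t x) \<noteq> 0"
    using assms by (force simp: deformation_def)
  then show ?thesis
  proof cases
    case 2
    then obtain x where "x \<in> {x. x \<in> P \<and> \<rho> x = y}" "g x * progress t x \<noteq> 0"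
      by (rule sum.not_neutral_contains_not_neutral)
    then show ?thesis by (intro that(2)) auto
  qed (auto intro: that(1))
qed

lemma waiting_contains_moving:
  assumes c: "chain_weights P g"
    and a: "g a \<noteq> 0" "progress t a \<noteq> 1" and b: "g b \<noteq> 0" "progress t b \<noteq> 0"
  shows "b \<subseteq> a"
proof -
  have "a \<subseteq> b \<or> b \<subseteq> a" by (rule chain_weights_chain[OF c a(1) b(1)])
  moreover have "\<not> a \<subset> b"
    using progress_stagger[of a b t] chain_weights_in[OF c a(1)] a(2) b(2) by blast
  ultimately show ?thesis by blast
qed

lemma deformation_chain:
  assumes c: "chain_weights P g" and "deformation t g x \<noteq> 0" "deformation t g y \<noteq> 0"
  shows "x \<subseteq> y \<or> y \<subseteq> x"
proof -
  have moved: "a \<subseteq> \<rho> b \<or> \<rho> b \<subseteq> a"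
    if "g a \<noteq> 0" "progress t a \<noteq> 1" "b \<in> P" "g b \<noteq> 0" "progress t b \<noteq> 0" for a b
    using waiting_contains_moving[OF c that(1,2,4,5)] retract_below[OF that(3)] by blast
  from assms(2) show ?thesis
  proof (cases rule: deformation_support)
    case 1
    from assms(3) show ?thesis
      by (cases rule: deformation_support) (use 1 chain_weights_chain[OF c] moved in blast)+
  next
    case (2 a)
    from assms(3) show ?thesis
    proof (cases rule: deformation_support)
      case (2 b)
      with \<open>g a \<noteq> 0\<close> have "a \<subseteq> b \<or> b \<subseteq> a" using chain_weights_chain[OF c] by blast
      then show ?thesis using retract_mono 2 \<open>a \<in> P\<close> \<open>\<rho> a = x\<close> by blast
    qed (use 2 moved in blast)
  qed
qed

lemma sum_deformation: "sum (deformation t g) P = sum g P"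
proof -
  have "sum (deformation t g) P = (\<Sum>y\<in>P. g y * (1 - progress t y)) + (\<Sum>x\<in>P. g x * progress t x)"
    unfolding deformation_def sum.distrib sum_fibres_retract ..
  also have "\<dots> = sum g P"
    by (simp add: sum.distrib[symmetric] algebra_simps)
  finally show ?thesis .
qed

lemma deformation_in_order_complex:
  assumes g: "g \<in> order_complex_points P"
  shows "deformation t g \<in> order_complex_points P"
proof -
  have c: "chain_weights P g" and s: "sum g P = 1"
    using g by (auto simp: order_complex_points_def)
  have "chain_weights P (deformation t g)"
    unfolding chain_weights_def
  proof (intro conjI allI impI)
    show "0 \<le> deformation t g y" for y
      unfolding deformation_def using chain_weights_nonneg[OF c] progress_bounds
      by (intro add_nonneg_nonneg sum_nonneg mult_nonneg_nonneg) auto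
    show "deformation t g y = 0" if "y \<notin> P" for y
      using that chain_weights_in[OF c, of y] retract_into retract_subset
      by (force elim: deformation_support)
    show "x \<subseteq> y \<or> y \<subseteq> x" if "deformation t g x \<noteq> 0 \<and> deformation t g y \<noteq> 0" for x y
      using that deformation_chain[OF c] by blast
  qed
  then show ?thesis
    using sum_deformation[of t g] s by (simp add: order_complex_points_def)
qed

lemma pushforward_in_order_complex:
  assumes g: "g \<in> order_complex_points P"
  shows "pushforward g \<in> order_complex_points Q"
proof -
  have h: "pushforward g \<in> order_complex_points P"
    using deformation_in_order_complex[OF g, of 1] by (simp add: deformation_1)
  have outside: "pushforward g y = 0" if "y \<notin> Q" for y
    unfolding pushforward_def using that retract_into by (intro sum.neutral) auto
  then have "chain_weights Q (pushforward g)"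
    using h by (auto simp: order_complex_points_def chain_weights_def)
  moreover have "sum (pushforward g) Q = sum (pushforward g) P"
    using outside by (intro sum.mono_neutral_left finite_P retract_subset) auto
  ultimately show ?thesis
    using h by (simp add: order_complex_points_def)
qed

lemma pushforward_id:
  assumes g: "g \<in> order_complex_points Q"
  shows "pushforward g = g"
proof
  fix y
  have c: "chain_weights Q g" using g by (simp add: order_complex_points_def)
  have "pushforward g y = sum g ({x \<in> P. \<rho> x = y} \<inter> Q)"
    unfolding pushforward_def using chain_weights_in[OF c] finite_P
    by (intro sum.mono_neutral_right) auto
  also have "{x \<in> P. \<rho> x = y} \<inter> Q = {y} \<inter> Q"
    using retract_id retract_subset by auto
  also have "sum g \<dots> = g y"
    using chain_weights_in[OF c, of y] by (cases "y \<in> Q") auto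
  finally show "pushforward g y = g y" .
qed

lemma continuous_map_deformation:
  "continuous_map (prod_topology (top_of_set {0..1}) (subtopology (powertop_real UNIV) D))
     (powertop_real UNIV) (\<lambda>(t, g). deformation t g)"
  unfolding continuous_map_componentwise_UNIV
proof
  fix y
  let ?Z = "prod_topology (top_of_set {0..1::real}) (subtopology (powertop_real UNIV) D)"
  have coordinate: "continuous_map ?Z euclideanreal (\<lambda>z. snd z x)" for x
    using continuous_map_compose[OF continuous_map_snd continuous_map_product_coordinate]
    by (simp add: o_def)
  have time: "continuous_map ?Z euclideanreal fst"
    using continuous_map_fst continuous_map_in_subtopology by blast
  have "continuous_map ?Z euclideanreal (\<lambda>z. progress (fst z) x)" for x
    unfolding progress_def
    by (intro continuous_map_real_max continuous_map_real_min continuous_map_diff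
        continuous_map_real_mult time continuous_map_canonical_const)
  then show "continuous_map ?Z euclideanreal (\<lambda>z. (case z of (t, g) \<Rightarrow> deformation t g) y)"
    unfolding deformation_def case_prod_beta
    by (intro continuous_map_add continuous_map_real_mult continuous_map_diff coordinate
        continuous_map_canonical_const continuous_map_sum) (auto intro: finite_subset[OF _ finite_P])
qed

lemma continuous_map_pushforward:
  "continuous_map (subtopology (powertop_real UNIV) D) (powertop_real UNIV) pushforward"
  unfolding continuous_map_componentwise_UNIV pushforward_def
  by (intro allI continuous_map_sum continuous_map_product_coordinate)
     (auto intro: finite_subset[OF _ finite_P])

theorem homotopy_equivalent_order_complex_retract:
  "order_complex_realization P homotopy_equivalent_space order_complex_realization Q"
proof -
  let ?XP = "subtopology (powertop_real UNIV) (order_complex_points P)"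
  let ?XQ = "subtopology (powertop_real UNIV) (order_complex_points Q)"
  have QP: "order_complex_points Q \<subseteq> order_complex_points P"
    by (rule order_complex_points_mono[OF finite_P retract_subset])
  have "homotopic_with (\<lambda>_. True) ?XP ?XP id pushforward"
    unfolding homotopic_with_def
  proof (intro exI conjI allI ballI)
    show "continuous_map (prod_topology (top_of_set {0..1}) ?XP) ?XP (\<lambda>(t, g). deformation t g)"
      unfolding continuous_map_in_subtopology
      using continuous_map_deformation deformation_in_order_complex by auto
  qed (simp_all add: deformation_0 deformation_1)
  moreover have "retraction_maps ?XP ?XQ pushforward id"
    unfolding retraction_maps_def continuous_map_in_subtopology
    using continuous_map_pushforward pushforward_in_order_complex pushforward_id QP
      continuous_map_from_subtopology[OF continuous_map_id]
    by auto
  ultimately show ?thesis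
    unfolding order_complex_realization_eq
    by (intro deformation_retract_imp_homotopy_equivalent_space) (auto simp: homotopic_with_sym)
qed

end

section \<open>Balanced sets as supports of balancing weights\<close>

lemma rel_interior_convex_hull_finite:
  fixes S :: "'a::euclidean_space set"
  assumes "finite S"
  shows "r \<in> rel_interior (convex hull S) \<longleftrightarrow>
    (\<exists>u. (\<forall>x\<in>S. 0 < u x) \<and> sum u S = 1 \<and> (\<Sum>x\<in>S. u x *\<^sub>R x) = r)"
  using rel_interior_convex_hull_union[where S="\<lambda>x. {x}" and I=S] assms by auto

locale point_configuration =
  fixes V :: "'a::euclidean_space set" and r :: 'a
  assumes finite_V: "finite V"
begin

abbreviation "balanced \<equiv> balanced_poset V r"
abbreviation "weakly_balanced \<equiv> weakly_balanced_poset V r"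

definition balancing_weights :: "('a \<Rightarrow> real) set" where
  "balancing_weights = {l. (\<forall>v. 0 \<le> l v) \<and> (\<forall>v. v \<notin> V \<longrightarrow> l v = 0) \<and> (\<Sum>v\<in>V. l v *\<^sub>R (v - r)) = 0}"

lemma balancing_weights_nonneg: "l \<in> balancing_weights \<Longrightarrow> 0 \<le> l v"
  by (simp add: balancing_weights_def)

lemma balancing_weights_outside: "l \<in> balancing_weights \<Longrightarrow> v \<notin> V \<Longrightarrow> l v = 0"
  by (simp add: balancing_weights_def)

lemma balancing_weights_support: "l \<in> balancing_weights \<Longrightarrow> {v. l v \<noteq> 0} \<subseteq> V"
  using balancing_weights_outside by blast

lemma balancing_weights_barycenter:
  "l \<in> balancing_weights \<Longrightarrow> (\<Sum>v\<in>V. l v *\<^sub>R v) = sum l V *\<^sub>R r"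
  by (simp add: balancing_weights_def scaleR_diff_right sum_subtractf scaleR_sum_left)

lemma balancing_weightsI:
  assumes "\<And>v. 0 \<le> l v" "\<And>v. v \<notin> V \<Longrightarrow> l v = 0" "(\<Sum>v\<in>V. l v *\<^sub>R v) = sum l V *\<^sub>R r"
  shows "l \<in> balancing_weights"
  using assms by (simp add: balancing_weights_def scaleR_diff_right sum_subtractf scaleR_sum_left)

lemma sum_V_eq_sum_subset:
  fixes f :: "'a \<Rightarrow> 'b::comm_monoid_add"
  assumes "S \<subseteq> V" "\<And>v. v \<notin> S \<Longrightarrow> f v = 0"
  shows "sum f V = sum f S"
  using assms finite_V by (intro sum.mono_neutral_right) auto

lemma convex_weights_iff_balancing_weights:
  assumes "S \<subseteq> V"
  shows "(\<exists>u. (\<forall>x\<in>S. 0 \<le> u x \<and> (u x = 0 \<longleftrightarrow> x \<notin> T)) \<and> sum u S = 1 \<and> (\<Sum>x\<in>S. u x *\<^sub>R x) = r)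
     \<longleftrightarrow> (\<exists>l\<in>balancing_weights. sum l V = 1 \<and> {v. l v \<noteq> 0} = S \<inter> T)"
proof
  assume "\<exists>u. (\<forall>x\<in>S. 0 \<le> u x \<and> (u x = 0 \<longleftrightarrow> x \<notin> T)) \<and> sum u S = 1 \<and> (\<Sum>x\<in>S. u x *\<^sub>R x) = r"
  then obtain u where u: "\<forall>x\<in>S. 0 \<le> u x \<and> (u x = 0 \<longleftrightarrow> x \<notin> T)" "sum u S = 1" "(\<Sum>x\<in>S. u x *\<^sub>R x) = r"
    by blast
  define l where "l v = (if v \<in> S then u v else 0)" for v
  have supp: "{v. l v \<noteq> 0} = S \<inter> T" using u(1) by (auto simp: l_def)
  have "sum l V = sum u S" "(\<Sum>v\<in>V. l v *\<^sub>R v) = (\<Sum>x\<in>S. u x *\<^sub>R x)"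
    by (simp_all add: sum_V_eq_sum_subset[OF assms] l_def)
  then have "sum l V = 1" "(\<Sum>v\<in>V. l v *\<^sub>R v) = r" using u(2,3) by simp_all
  then have "l \<in> balancing_weights"
    using u(1) assms by (intro balancing_weightsI) (auto simp: l_def)
  with supp \<open>sum l V = 1\<close> show "\<exists>l\<in>balancing_weights. sum l V = 1 \<and> {v. l v \<noteq> 0} = S \<inter> T"
    by blast
next
  assume "\<exists>l\<in>balancing_weights. sum l V = 1 \<and> {v. l v \<noteq> 0} = S \<inter> T"
  then obtain l where l: "l \<in> balancing_weights" "sum l V = 1" "{v. l v \<noteq> 0} = S \<inter> T" by blast
  have "sum l V = sum l S" "(\<Sum>v\<in>V. l v *\<^sub>R v) = (\<Sum>x\<in>S. l x *\<^sub>R x)"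
    using l(3) sum_V_eq_sum_subset[OF assms, of l] sum_V_eq_sum_subset[OF assms, of "\<lambda>v. l v *\<^sub>R v"]
    by auto
  then have "sum l S = 1" "(\<Sum>x\<in>S. l x *\<^sub>R x) = r"
    using l(2) balancing_weights_barycenter[OF l(1)] by simp_all
  moreover have "\<forall>x\<in>S. 0 \<le> l x \<and> (l x = 0 \<longleftrightarrow> x \<notin> T)"
    using l(3) balancing_weights_nonneg[OF l(1)] by auto
  ultimately show "\<exists>u. (\<forall>x\<in>S. 0 \<le> u x \<and> (u x = 0 \<longleftrightarrow> x \<notin> T)) \<and> sum u S = 1 \<and> (\<Sum>x\<in>S. u x *\<^sub>R x) = r"
    by blast
qed

lemma rel_interior_hull_iff_balancing_support:
  assumes "S \<subseteq> V"
  shows "r \<in> rel_interior (convex hull S) \<longleftrightarrow>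
    (\<exists>l\<in>balancing_weights. sum l V = 1 \<and> {v. l v \<noteq> 0} = S)"
proof -
  have "finite S" using assms finite_V finite_subset by blast
  then show ?thesis
    using convex_weights_iff_balancing_weights[OF assms, of UNIV]
    by (simp add: rel_interior_convex_hull_finite less_le conj_commute)
qed

lemma convex_hull_iff_balancing_support:
  assumes "S \<subseteq> V"
  shows "r \<in> convex hull S \<longleftrightarrow> (\<exists>l\<in>balancing_weights. sum l V = 1 \<and> {v. l v \<noteq> 0} \<subseteq> S)"
proof -
  have "finite S" using assms finite_V finite_subset by blast
  then have "r \<in> convex hull S \<longleftrightarrow>
      (\<exists>u. (\<forall>x\<in>S. 0 \<le> u x) \<and> sum u S = 1 \<and> (\<Sum>x\<in>S. u x *\<^sub>R x) = r)"
    by (auto simp: convex_hull_finite)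
  also have "\<dots> \<longleftrightarrow>
      (\<exists>T u. (\<forall>x\<in>S. 0 \<le> u x \<and> (u x = 0 \<longleftrightarrow> x \<notin> T)) \<and> sum u S = 1 \<and> (\<Sum>x\<in>S. u x *\<^sub>R x) = r)"
    (is "?convex \<longleftrightarrow> ?with_support")
  proof
    assume ?convex
    then obtain u where "\<forall>x\<in>S. 0 \<le> u x" "sum u S = 1" "(\<Sum>x\<in>S. u x *\<^sub>R x) = r"
      by blast
    then show ?with_support by (intro exI[of _ "{x. u x \<noteq> 0}"] exI[of _ u]) auto
  qed blast
  also have "\<dots> \<longleftrightarrow> (\<exists>T. \<exists>l\<in>balancing_weights. sum l V = 1 \<and> {v. l v \<noteq> 0} = S \<inter> T)"
    using convex_weights_iff_balancing_weights[OF assms] by simp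
  also have "\<dots> \<longleftrightarrow> (\<exists>l\<in>balancing_weights. sum l V = 1 \<and> {v. l v \<noteq> 0} \<subseteq> S)"
  proof
    assume "\<exists>l\<in>balancing_weights. sum l V = 1 \<and> {v. l v \<noteq> 0} \<subseteq> S"
    then obtain l where "l \<in> balancing_weights" "sum l V = 1" "{v. l v \<noteq> 0} = S \<inter> {v. l v \<noteq> 0}"
      by blast
    then show "\<exists>T. \<exists>l\<in>balancing_weights. sum l V = 1 \<and> {v. l v \<noteq> 0} = S \<inter> T" by blast
  qed blast
  finally show ?thesis .
qed

lemma balanced_iff:
  "S \<in> balanced \<longleftrightarrow> S \<subseteq> V \<and> S \<noteq> V \<and> (\<exists>l\<in>balancing_weights. sum l V = 1 \<and> {v. l v \<noteq> 0} = S)"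
  unfolding balanced_poset_def using rel_interior_hull_iff_balancing_support by blast

lemma weakly_balanced_iff:
  "S \<in> weakly_balanced \<longleftrightarrow>
    S \<subseteq> V \<and> S \<noteq> V \<and> (\<exists>l\<in>balancing_weights. sum l V = 1 \<and> {v. l v \<noteq> 0} \<subseteq> S)"
  unfolding weakly_balanced_poset_def using convex_hull_iff_balancing_support by blast

lemma finite_weakly_balanced: "finite weakly_balanced"
  by (rule finite_subset[of _ "Pow V"]) (auto simp: weakly_balanced_poset_def finite_V)

lemma balanced_subset_weakly_balanced: "balanced \<subseteq> weakly_balanced"
  unfolding balanced_poset_def weakly_balanced_poset_def using rel_interior_subset by blast

lemma finite_balanced: "finite balanced"
  using finite_subset[OF balanced_subset_weakly_balanced finite_weakly_balanced] .

lemma balanced_subset_V: "S \<in> balanced \<Longrightarrow> S \<subseteq> V"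
  by (simp add: balanced_poset_def)

lemma finite_balanced_set: "S \<in> balanced \<Longrightarrow> finite S"
  using balanced_subset_V finite_V finite_subset by blast

lemma balancing_weights_scale:
  "l \<in> balancing_weights \<Longrightarrow> 0 \<le> a \<Longrightarrow> (\<lambda>v. a * l v) \<in> balancing_weights"
  by (intro balancing_weightsI)
     (simp_all add: balancing_weights_nonneg balancing_weights_outside balancing_weights_barycenter
       flip: scaleR_scaleR scaleR_sum_right sum_distrib_left)

lemma balancing_weights_diff:
  assumes "l \<in> balancing_weights" "m \<in> balancing_weights" "\<And>v. m v \<le> l v"
  shows "(\<lambda>v. l v - m v) \<in> balancing_weights"
  using assms
  by (intro balancing_weightsI)
     (simp_all add: balancing_weights_outside balancing_weights_barycenter scaleR_diff_left
       sum_subtractf)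

lemma balancing_weights_normalize:
  assumes "l \<in> balancing_weights" "l \<noteq> (\<lambda>_. 0)"
  shows "sum l V > 0" "(\<lambda>v. l v / sum l V) \<in> balancing_weights" "sum (\<lambda>v. l v / sum l V) V = 1"
proof -
  obtain v where "l v \<noteq> 0" using assms(2) by auto
  then have "v \<in> V" "0 < l v"
    using assms(1) balancing_weights_outside balancing_weights_nonneg by (auto simp: less_le)
  then show pos: "sum l V > 0"
    using finite_V balancing_weights_nonneg[OF assms(1)] by (metis sum_pos2)
  show "(\<lambda>v. l v / sum l V) \<in> balancing_weights"
    using balancing_weights_scale[OF assms(1), of "1 / sum l V"] pos by simp
  show "sum (\<lambda>v. l v / sum l V) V = 1"
    using pos by (simp flip: sum_divide_distrib)
qed

lemma support_balanced:
  assumes "l \<in> balancing_weights" "l \<noteq> (\<lambda>_. 0)" "{v. l v \<noteq> 0} \<noteq> V"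
  shows "{v. l v \<noteq> 0} \<in> balanced"
proof -
  have "{v. l v / sum l V \<noteq> 0} = {v. l v \<noteq> 0}"
    using balancing_weights_normalize(1)[OF assms(1,2)] by auto
  then show ?thesis
    unfolding balanced_iff
    using assms balancing_weights_support balancing_weights_normalize(2,3)[OF assms(1,2)] by metis
qed

definition witness :: "'a set \<Rightarrow> 'a \<Rightarrow> real" where
  "witness S = (SOME l. l \<in> balancing_weights \<and> sum l V = 1 \<and> {v. l v \<noteq> 0} = S)"

lemma witness:
  assumes "S \<in> balanced"
  shows "witness S \<in> balancing_weights" "sum (witness S) V = 1" "{v. witness S v \<noteq> 0} = S"
proof -
  have "\<exists>l. l \<in> balancing_weights \<and> sum l V = 1 \<and> {v. l v \<noteq> 0} = S"
    using assms balanced_iff by blast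
  from someI_ex[OF this] show "witness S \<in> balancing_weights" "sum (witness S) V = 1"
      "{v. witness S v \<noteq> 0} = S"
    unfolding witness_def by auto
qed

lemma witness_pos: "S \<in> balanced \<Longrightarrow> v \<in> S \<Longrightarrow> 0 < witness S v"
  using witness[of S] balancing_weights_nonneg[of "witness S" v] by (auto simp: less_le)

lemma balanced_nonempty: "S \<in> balanced \<Longrightarrow> S \<noteq> {}"
  using witness(2,3)[of S] by auto

definition combine :: "('a set \<Rightarrow> real) \<Rightarrow> 'a \<Rightarrow> real" where
  "combine g v = (\<Sum>S\<in>balanced. g S * witness S v)"

lemma sum_combine: "sum (combine g) V = sum g balanced"
  unfolding combine_def
  by (subst sum.swap) (simp add: witness(2) flip: sum_distrib_left)

lemma combine_in_balancing_weights:
  assumes "\<And>S. 0 \<le> g S"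
  shows "combine g \<in> balancing_weights"
proof (rule balancing_weightsI)
  show "0 \<le> combine g v" for v
    unfolding combine_def using assms witness(1) balancing_weights_nonneg by (intro sum_nonneg) auto
  show "combine g v = 0" if "v \<notin> V" for v
    unfolding combine_def using that witness(1) balancing_weights_outside by (intro sum.neutral) auto
  have "(\<Sum>v\<in>V. combine g v *\<^sub>R v) = (\<Sum>S\<in>balanced. g S *\<^sub>R (\<Sum>v\<in>V. witness S v *\<^sub>R v))"
    unfolding combine_def by (simp add: scaleR_sum_left scaleR_sum_right sum.swap[of _ V])
  also have "\<dots> = sum (combine g) V *\<^sub>R r"
    by (simp add: sum_combine witness balancing_weights_barycenter scaleR_sum_left)
  finally show "(\<Sum>v\<in>V. combine g v *\<^sub>R v) = sum (combine g) V *\<^sub>R r" .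
qed

lemma combine_support:
  assumes "\<And>S. 0 \<le> g S"
  shows "{v. combine g v \<noteq> 0} = \<Union>{S \<in> balanced. g S \<noteq> 0}"
proof -
  have "combine g v = 0 \<longleftrightarrow> (\<forall>S\<in>balanced. g S * witness S v = 0)" for v
    unfolding combine_def using assms witness(1) balancing_weights_nonneg
    by (intro sum_nonneg_eq_0_iff finite_balanced) auto
  moreover have "g S * witness S v = 0 \<longleftrightarrow> g S = 0 \<or> v \<notin> S" if "S \<in> balanced" for S v
    using witness(3)[OF that] by auto
  ultimately show ?thesis by auto
qed

lemma combine_split:
  assumes "S \<in> balanced"
  shows "combine g v = g S * witness S v + combine (g(S := 0)) v"
proof -
  have "combine g v = g S * witness S v + (\<Sum>T\<in>balanced - {S}. g T * witness T v)"
    unfolding combine_def by (rule sum.remove[OF finite_balanced assms])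
  moreover have "combine (g(S := 0)) v = (\<Sum>T\<in>balanced - {S}. g T * witness T v)"
    unfolding combine_def by (subst sum.remove[OF finite_balanced assms]) (auto intro!: sum.cong)
  ultimately show ?thesis by simp
qed

section \<open>Weakly balanced and balanced sets\<close>

definition balanced_core :: "'a set \<Rightarrow> 'a set" where
  "balanced_core S = \<Union>{T \<in> balanced. T \<subseteq> S}"

lemma balanced_core_balanced:
  assumes "S \<in> weakly_balanced"
  shows "balanced_core S \<in> balanced"
proof -
  define F where "F = {T \<in> balanced. T \<subseteq> S}"
  obtain l where l: "l \<in> balancing_weights" "sum l V = 1" "{v. l v \<noteq> 0} \<subseteq> S"
    using assms weakly_balanced_iff by blast
  have "{v. l v \<noteq> 0} \<in> balanced"
    using l assms by (intro support_balanced) (auto simp: weakly_balanced_iff)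
  then have "F \<noteq> {}" using l(3) by (auto simp: F_def)
  then have "card F > 0" using finite_subset[OF _ finite_balanced] by (auto simp: F_def card_gt_0_iff)
  define g where "g T = (if T \<in> F then 1 / card F else 0)" for T
  have g_nonneg: "0 \<le> g T" for T by (simp add: g_def)
  have "combine g \<in> balancing_weights" by (rule combine_in_balancing_weights[OF g_nonneg])
  moreover have "sum (combine g) V = 1"
  proof -
    have "sum g balanced = (\<Sum>T\<in>F. 1 / card F)"
      by (rule sum.mono_neutral_cong_right) (auto simp: finite_balanced g_def F_def)
    then show ?thesis using \<open>card F > 0\<close> by (simp add: sum_combine)
  qed
  moreover have "{v. combine g v \<noteq> 0} = balanced_core S"
    using \<open>card F > 0\<close> by (auto simp: combine_support[OF g_nonneg] balanced_core_def g_def F_def)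
  moreover have "balanced_core S \<subseteq> S" by (auto simp: balanced_core_def)
  ultimately show ?thesis
    using assms unfolding balanced_iff weakly_balanced_iff by blast
qed

theorem homotopy_equivalent_weakly_balanced_balanced:
  "order_complex_realization weakly_balanced homotopy_equivalent_space order_complex_realization balanced"
proof -
  interpret order_retraction weakly_balanced balanced balanced_core
    by unfold_locales
      (use finite_weakly_balanced balanced_subset_weakly_balanced balanced_core_balanced in
        \<open>auto simp: balanced_core_def\<close>)
  show ?thesis by (rule homotopy_equivalent_order_complex_retract)
qed

section \<open>The order complex of balanced sets is the boundary of the weight polytope\<close>

definition boundary_weights :: "('a \<Rightarrow> real) set" where
  "boundary_weights = {p \<in> balancing_weights. sum p V = 1 \<and> (\<exists>v\<in>V. p v = 0)}"

lemma combine_chain_support: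
  "chain_weights balanced g \<Longrightarrow> {v. combine g v \<noteq> 0} = \<Union>{S. g S \<noteq> 0}"
  using combine_support[of g] chain_weights_nonneg chain_weights_in by blast

lemma combine_eq_0_iff:
  assumes "chain_weights balanced g"
  shows "combine g = (\<lambda>_. 0) \<longleftrightarrow> g = (\<lambda>_. 0)"
proof
  assume "combine g = (\<lambda>_. 0)"
  then have "\<Union>{S. g S \<noteq> 0} = {}" using combine_chain_support[OF assms] by simp
  then show "g = (\<lambda>_. 0)"
    using balanced_nonempty chain_weights_in[OF assms] by blast
qed (simp add: combine_def fun_eq_iff)

lemma combine_in_boundary_weights:
  assumes "g \<in> order_complex_points balanced"
  shows "combine g \<in> boundary_weights"
proof -
  have g: "chain_weights balanced g" "sum g balanced = 1"
    using assms by (auto simp: order_complex_points_def)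
  define S where "S = \<Union>{S. g S \<noteq> 0}"
  have "S \<in> balanced"
    using chain_weights_top[OF finite_balanced g(1)] chain_weights_in[OF g(1)]
      order_complex_point_ne_zero[OF assms] by (auto simp: S_def)
  then obtain v where "v \<in> V" "v \<notin> S" by (auto simp: balanced_iff)
  then have "combine g v = 0" using combine_chain_support[OF g(1)] by (auto simp: S_def)
  with \<open>v \<in> V\<close> show ?thesis
    using combine_in_balancing_weights[OF chain_weights_nonneg[OF g(1)]] g(2)
    by (auto simp: boundary_weights_def sum_combine)
qed

lemma combine_vanishes_below_top:
  assumes g: "chain_weights balanced g" and S: "S \<in> balanced" "\<Union>{T. g T \<noteq> 0} \<subseteq> S" "g S = 0"
  obtains w where "w \<in> S" "combine g w = 0"
proof -
  have "\<Union>{T. g T \<noteq> 0} \<noteq> S"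
  proof
    assume top: "\<Union>{T. g T \<noteq> 0} = S"
    have "g \<noteq> (\<lambda>_. 0)"
    proof
      assume "g = (\<lambda>_. 0)"
      with top balanced_nonempty[OF S(1)] show False by simp
    qed
    then show False using chain_weights_top[OF finite_balanced g] top S(3) by simp
  qed
  with S(2) show ?thesis using combine_chain_support[OF g] that by blast
qed

text \<open>The coefficient of the largest set \<open>S\<close> of the chain is read off from \<open>combine g\<close>, because
  the remaining sets of the chain miss some point of \<open>S\<close>.\<close>

lemma top_coefficient:
  assumes g: "chain_weights balanced g" "g \<noteq> (\<lambda>_. 0)" and S: "S = \<Union>{T. g T \<noteq> 0}"
  shows "g S = Min ((\<lambda>v. combine g v / witness S v) ` S)"
proof -
  have "g S \<noteq> 0" using chain_weights_top[OF finite_balanced g] S by simp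
  then have SB: "S \<in> balanced" by (rule chain_weights_in[OF g(1)])
  let ?g0 = "g(S := 0)"
  have g0: "chain_weights balanced ?g0" by (rule chain_weights_delete[OF g(1)])
  have split: "combine g v / witness S v = g S + combine ?g0 v / witness S v" if "v \<in> S" for v
    using combine_split[OF SB, of g v] witness_pos[OF SB that] by (simp add: field_simps)
  have "\<Union>{T. ?g0 T \<noteq> 0} \<subseteq> S" using S by auto
  then obtain w where w: "w \<in> S" "combine ?g0 w = 0"
    by (rule combine_vanishes_below_top[OF g0 SB _ fun_upd_same])
  show ?thesis
  proof (rule Min_eqI[symmetric])
    show "finite ((\<lambda>v. combine g v / witness S v) ` S)"
      by (rule finite_imageI[OF finite_balanced_set[OF SB]])
    show "g S \<le> y" if y: "y \<in> (\<lambda>v. combine g v / witness S v) ` S" for y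
    proof -
      obtain v where v: "v \<in> S" "y = combine g v / witness S v"
        using y by (rule imageE) simp
      have "0 \<le> combine ?g0 v"
        by (rule balancing_weights_nonneg[OF combine_in_balancing_weights[OF chain_weights_nonneg[OF g0]]])
      then show ?thesis using split[OF v(1)] v(2) witness_pos[OF SB v(1)] by simp
    qed
    show "g S \<in> (\<lambda>v. combine g v / witness S v) ` S"
      using w split by force
  qed
qed

lemma combine_inj:
  "chain_weights balanced g \<Longrightarrow> chain_weights balanced g' \<Longrightarrow> combine g = combine g' \<Longrightarrow> g = g'"
proof (induction "card {S. g S \<noteq> 0}" arbitrary: g g' rule: less_induct)
  case less
  note g = less.prems(1) and g' = less.prems(2) and eq = less.prems(3)
  show ?case
  proof (cases "g = (\<lambda>_. 0)")
    case True
    then have "combine g' = (\<lambda>_. 0)" using eq combine_eq_0_iff[OF g] by metis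
    then show ?thesis using True combine_eq_0_iff[OF g'] by metis
  next
    case False
    then have "g' \<noteq> (\<lambda>_. 0)" using eq combine_eq_0_iff[OF g] combine_eq_0_iff[OF g'] by metis
    define S where "S = \<Union>{T. g T \<noteq> 0}"
    have S': "S = \<Union>{T. g' T \<noteq> 0}"
      using combine_chain_support[OF g] combine_chain_support[OF g'] eq by (simp add: S_def)
    have top: "g S = g' S"
      using top_coefficient[OF g False S_def] top_coefficient[OF g' \<open>g' \<noteq> _\<close> S'] eq by simp
    have "g S \<noteq> 0" using chain_weights_top[OF finite_balanced g False] by (simp add: S_def)
    then have SB: "S \<in> balanced" by (rule chain_weights_in[OF g])
    have "combine (g(S := 0)) = combine (g'(S := 0))"
      using combine_split[OF SB, of g] combine_split[OF SB, of g'] eq top by (auto simp: fun_eq_iff)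
    moreover have "card {T. (g(S := 0)) T \<noteq> 0} < card {T. g T \<noteq> 0}"
      using finite_chain_weights_support[OF finite_balanced g] \<open>g S \<noteq> 0\<close>
      by (intro psubset_card_mono) auto
    ultimately have "g(S := 0) = g'(S := 0)"
      using less.hyps chain_weights_delete g g' by blast
    then show ?thesis using top by (metis fun_upd_triv fun_upd_upd)
  qed
qed

lemma peel_witness:
  assumes l: "l \<in> balancing_weights" and S: "S = {v. l v \<noteq> 0}" "S \<in> balanced"
  obtains t where "0 < t" "(\<lambda>v. l v - t * witness S v) \<in> balancing_weights"
    "{v. l v - t * witness S v \<noteq> 0} \<subset> S"
proof -
  have "finite S" "S \<noteq> {}"
    using finite_balanced_set[OF S(2)] balanced_nonempty[OF S(2)] by simp_all
  define t where "t = Min ((\<lambda>v. l v / witness S v) ` S)"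
  have t_le: "t \<le> l v / witness S v" if "v \<in> S" for v
    unfolding t_def using \<open>finite S\<close> that by (intro Min_le) auto
  have "t \<in> (\<lambda>v. l v / witness S v) ` S"
    unfolding t_def using \<open>finite S\<close> \<open>S \<noteq> {}\<close> by (intro Min_in) auto
  then obtain w where w: "t = l w / witness S w" "w \<in> S" by (rule imageE)
  have pos: "0 < witness S v" "0 < l v" if "v \<in> S" for v
    using witness_pos[OF S(2) that] that balancing_weights_nonneg[OF l, of v] S(1)
    by (auto simp: less_le)
  let ?l = "\<lambda>v. l v - t * witness S v"
  have outside_S: "l v = 0" "witness S v = 0" if "v \<notin> S" for v
    using that S(1) witness(3)[OF S(2)] by auto
  have "0 < t" using w pos by simp
  have below: "t * witness S v \<le> l v" for v
    using t_le[of v] pos[of v] outside_S[of v] by (cases "v \<in> S") (auto simp: field_simps)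
  have "(\<lambda>v. t * witness S v) \<in> balancing_weights"
    using \<open>0 < t\<close> by (intro balancing_weights_scale[OF witness(1)[OF S(2)]]) simp
  then have "?l \<in> balancing_weights"
    using below by (rule balancing_weights_diff[OF l])
  moreover have "{v. ?l v \<noteq> 0} \<subset> S"
  proof -
    have "{v. ?l v \<noteq> 0} \<subseteq> S"
    proof
      fix v assume "v \<in> {v. ?l v \<noteq> 0}"
      then show "v \<in> S" using outside_S[of v] by (cases "v \<in> S") simp_all
    qed
    moreover have "?l w = 0" using w pos(1)[OF w(2)] by simp
    ultimately show ?thesis using w(2) by blast
  qed
  ultimately show ?thesis using \<open>0 < t\<close> that by blast
qed

lemma combine_surj:
  "l \<in> balancing_weights \<Longrightarrow> {v. l v \<noteq> 0} \<noteq> V \<Longrightarrow> \<exists>g. chain_weights balanced g \<and> combine g = l"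
proof (induction "card {v. l v \<noteq> 0}" arbitrary: l rule: less_induct)
  case less
  define S where "S = {v. l v \<noteq> 0}"
  show ?case
  proof (cases "l = (\<lambda>_. 0)")
    case True
    then show ?thesis by (intro exI[of _ "\<lambda>_. 0"]) (simp add: chain_weights_def combine_def fun_eq_iff)
  next
    case False
    then have SB: "S \<in> balanced" using support_balanced less.prems by (simp add: S_def)
    obtain t where t: "0 < t" "(\<lambda>v. l v - t * witness S v) \<in> balancing_weights"
      and smaller: "{v. l v - t * witness S v \<noteq> 0} \<subset> S"
      using peel_witness[OF less.prems(1) S_def SB] .
    have "card {v. l v - t * witness S v \<noteq> 0} < card {v. l v \<noteq> 0}"
      using smaller finite_balanced_set[OF SB] by (simp add: S_def psubset_card_mono)
    moreover have "{v. l v - t * witness S v \<noteq> 0} \<noteq> V"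
      using smaller balanced_subset_V[OF SB] by blast
    ultimately have "\<exists>g. chain_weights balanced g \<and> combine g = (\<lambda>v. l v - t * witness S v)"
      using t(2) by (intro less.hyps)
    then obtain g where g: "chain_weights balanced g" "combine g = (\<lambda>v. l v - t * witness S v)"
      by blast
    have "\<Union>{T. g T \<noteq> 0} = {v. l v - t * witness S v \<noteq> 0}"
      using combine_chain_support[OF g(1)] g(2) by simp
    then have below: "T \<subset> S" if "g T \<noteq> 0" for T
      using smaller that by blast
    then have "g S = 0" by blast
    have "chain_weights balanced (g(S := t))"
      using g(1) SB t(1) below unfolding chain_weights_def by (auto simp: less_imp_le)
    moreover have "combine (g(S := t)) = l"
      using combine_split[OF SB, of "g(S := t)"] \<open>g S = 0\<close> g(2) by (auto simp: fun_eq_iff fun_upd_idem)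
    ultimately show ?thesis by blast
  qed
qed

lemma continuous_map_combine:
  "continuous_map (subtopology (powertop_real UNIV) D) (powertop_real UNIV) combine"
  unfolding continuous_map_componentwise_UNIV combine_def
  by (intro allI continuous_map_sum finite_balanced continuous_map_real_mult
      continuous_map_product_coordinate continuous_map_canonical_const)

theorem homeomorphic_map_combine:
  "homeomorphic_map (order_complex_realization balanced)
     (subtopology (powertop_real UNIV) boundary_weights) combine"
  unfolding order_complex_realization_eq
proof (rule continuous_imp_homeomorphic_map)
  show "continuous_map (subtopology (powertop_real UNIV) (order_complex_points balanced))
      (subtopology (powertop_real UNIV) boundary_weights) combine"
    unfolding continuous_map_in_subtopology
    using continuous_map_combine combine_in_boundary_weights by auto
  show "compact_space (subtopology (powertop_real UNIV) (order_complex_points balanced))"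
    by (rule compact_space_order_complex_points[OF finite_balanced])
  show "Hausdorff_space (subtopology (powertop_real UNIV) boundary_weights)"
    by (rule Hausdorff_space_powertop_real_subtopology)
  have "p \<in> combine ` order_complex_points balanced" if "p \<in> boundary_weights" for p
  proof -
    from that have p: "p \<in> balancing_weights" "sum p V = 1" "{v. p v \<noteq> 0} \<noteq> V"
      by (auto simp: boundary_weights_def)
    then obtain g where g: "chain_weights balanced g" "combine g = p" using combine_surj by blast
    then have "sum g balanced = 1" using p(2) sum_combine by metis
    with g show ?thesis by (auto simp: order_complex_points_def)
  qed
  then show "combine ` topspace (subtopology (powertop_real UNIV) (order_complex_points balanced))
      = topspace (subtopology (powertop_real UNIV) boundary_weights)"
    using combine_in_boundary_weights by auto
  show "inj_on combine (topspace (subtopology (powertop_real UNIV) (order_complex_points balanced)))"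
    by (auto intro!: inj_onI combine_inj simp: order_complex_points_def)
qed

end

section \<open>The boundary of the weight polytope is a sphere\<close>

lemma continuous_map_Max:
  assumes "finite I" "I \<noteq> {}" "\<And>i. i \<in> I \<Longrightarrow> continuous_map X euclideanreal (f i)"
  shows "continuous_map X euclideanreal (\<lambda>x. Max ((\<lambda>i. f i x) ` I))"
  using assms
proof (induction I rule: finite_ne_induct)
  case (insert i I)
  then have "continuous_map X euclideanreal (\<lambda>x. max (f i x) (Max ((\<lambda>i. f i x) ` I)))"
    by (intro continuous_map_real_max) auto
  then show ?case using insert by simp
qed simp

context point_configuration
begin

definition affine_dependences :: "('a \<Rightarrow> real) set" where
  "affine_dependences = {u. (\<forall>v. v \<notin> V \<longrightarrow> u v = 0) \<and> sum u V = 0 \<and> (\<Sum>v\<in>V. u v *\<^sub>R v) = 0}"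

lemma affine_dependences_lincomb:
  assumes "finite I" "\<And>i. i \<in> I \<Longrightarrow> x i \<in> affine_dependences"
  shows "(\<lambda>v. \<Sum>i\<in>I. a i * x i v) \<in> affine_dependences"
proof -
  have "(\<Sum>v\<in>V. \<Sum>i\<in>I. a i * x i v) = (\<Sum>i\<in>I. a i * sum (x i) V)"
    by (subst sum.swap) (simp add: sum_distrib_left)
  moreover have "(\<Sum>v\<in>V. (\<Sum>i\<in>I. a i * x i v) *\<^sub>R v) = (\<Sum>i\<in>I. a i *\<^sub>R (\<Sum>v\<in>V. x i v *\<^sub>R v))"
    by (simp add: scaleR_sum_left scaleR_sum_right sum.swap[of _ V])
  ultimately show ?thesis
    using assms(2) by (auto simp: affine_dependences_def intro!: sum.neutral)
qed

lemma affine_dependences_diff: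
  "u \<in> affine_dependences \<Longrightarrow> w \<in> affine_dependences \<Longrightarrow> (\<lambda>v. u v - w v) \<in> affine_dependences"
  by (auto simp: affine_dependences_def sum_subtractf scaleR_diff_left)

lemma affine_dependences_divide:
  assumes "u \<in> affine_dependences"
  shows "(\<lambda>v. u v / s) \<in> affine_dependences"
proof -
  have "(\<Sum>v\<in>V. (u v / s) *\<^sub>R v) = (1 / s) *\<^sub>R (\<Sum>v\<in>V. u v *\<^sub>R v)"
    by (simp add: scaleR_sum_right divide_inverse mult.commute)
  then show ?thesis
    using assms by (auto simp: affine_dependences_def simp flip: sum_divide_distrib)
qed

definition affine_frame :: "'a set" where
  "affine_frame = (SOME B. B \<subseteq> V \<and> \<not> affine_dependent B \<and> affine hull V = affine hull B)"

lemma affine_frame: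
  "affine_frame \<subseteq> V" "\<not> affine_dependent affine_frame" "affine hull V = affine hull affine_frame"
  using someI_ex[OF affine_basis_exists[of V]] unfolding affine_frame_def[symmetric] by auto

lemma finite_affine_frame: "finite affine_frame"
  using affine_frame(1) finite_V finite_subset by blast

definition free_points :: "'a set" where
  "free_points = V - affine_frame"

lemma finite_free_points: "finite free_points"
  using finite_V by (simp add: free_points_def)

definition frame_coordinates :: "'a \<Rightarrow> 'a \<Rightarrow> real" where
  "frame_coordinates f = (SOME u. sum u affine_frame = 1 \<and> (\<Sum>a\<in>affine_frame. u a *\<^sub>R a) = f)"

lemma frame_coordinates:
  assumes "f \<in> V"
  shows "sum (frame_coordinates f) affine_frame = 1"
    "(\<Sum>a\<in>affine_frame. frame_coordinates f a *\<^sub>R a) = f"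
proof -
  have "f \<in> affine hull affine_frame"
    using hull_inc[OF assms, of affine] affine_frame(3) by simp
  then have "\<exists>u. sum u affine_frame = 1 \<and> (\<Sum>a\<in>affine_frame. u a *\<^sub>R a) = f"
    unfolding affine_hull_finite[OF finite_affine_frame] by simp
  from someI_ex[OF this] show "sum (frame_coordinates f) affine_frame = 1"
      "(\<Sum>a\<in>affine_frame. frame_coordinates f a *\<^sub>R a) = f"
    unfolding frame_coordinates_def[symmetric] by auto
qed

definition elementary_dependence :: "'a \<Rightarrow> 'a \<Rightarrow> real" where
  "elementary_dependence f v =
    (if v = f then 1 else 0) - (if v \<in> affine_frame then frame_coordinates f v else 0)"

lemma elementary_dependence:
  assumes f: "f \<in> free_points"
  shows "elementary_dependence f \<in> affine_dependences"
proof -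
  have fV: "f \<in> V" "f \<notin> affine_frame" using f by (auto simp: free_points_def)
  have frame_sum: "(\<Sum>v\<in>V. if v \<in> affine_frame then h v else 0) = sum h affine_frame" for h :: "'a \<Rightarrow> 'b::comm_monoid_add"
    using sum.inter_restrict[OF finite_V, of h affine_frame] affine_frame(1) by (simp add: Int_absorb1)
  have "sum (elementary_dependence f) V = 0"
    using frame_sum[of "frame_coordinates f"] frame_coordinates(1)[OF fV(1)] fV(1) finite_V
    by (simp add: elementary_dependence_def sum_subtractf)
  moreover have "(\<Sum>v\<in>V. elementary_dependence f v *\<^sub>R v) = 0"
    using frame_sum[of "\<lambda>v. frame_coordinates f v *\<^sub>R v"] frame_coordinates(2)[OF fV(1)] fV(1) finite_V
    by (simp add: elementary_dependence_def scaleR_diff_left sum_subtractf if_distrib[of "\<lambda>x. x *\<^sub>R _"]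
        cong: if_cong)
  moreover have "elementary_dependence f v = 0" if "v \<notin> V" for v
    using that fV affine_frame(1) by (auto simp: elementary_dependence_def)
  ultimately show ?thesis by (simp add: affine_dependences_def)
qed

lemma elementary_dependence_free_point:
  "f \<in> free_points \<Longrightarrow> f' \<in> free_points \<Longrightarrow> elementary_dependence f f' = (if f' = f then 1 else 0)"
  by (auto simp: elementary_dependence_def free_points_def)

lemma affine_dependence_eq_0:
  assumes u: "u \<in> affine_dependences" and free: "\<And>f. f \<in> free_points \<Longrightarrow> u f = 0"
  shows "u v = 0"
proof -
  have outside: "u v = 0" if "v \<notin> affine_frame" for v
    using u free that by (cases "v \<in> V") (auto simp: affine_dependences_def free_points_def)
  have "sum u affine_frame = 0" "(\<Sum>a\<in>affine_frame. u a *\<^sub>R a) = 0"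
    using u sum_V_eq_sum_subset[OF affine_frame(1), of u] outside
      sum_V_eq_sum_subset[OF affine_frame(1), of "\<lambda>v. u v *\<^sub>R v"]
    by (auto simp: affine_dependences_def)
  then have "\<forall>a\<in>affine_frame. u a = 0"
    using affine_frame(2) affine_dependent_explicit_finite[OF finite_affine_frame] by blast
  then show ?thesis using outside by (cases "v \<in> affine_frame") auto
qed

lemma affine_dependence_expansion:
  assumes u: "u \<in> affine_dependences"
  shows "u v = (\<Sum>f\<in>free_points. u f * elementary_dependence f v)"
proof -
  define w where "w v = u v - (\<Sum>f\<in>free_points. u f * elementary_dependence f v)" for v
  have "w \<in> affine_dependences"
    unfolding w_def
    by (intro affine_dependences_diff u affine_dependences_lincomb finite_free_points elementary_dependence)
  moreover have "w f = 0" if "f \<in> free_points" for f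
  proof -
    have "(\<Sum>f'\<in>free_points. u f' * elementary_dependence f' f) = (\<Sum>f'\<in>free_points. if f = f' then u f' else 0)"
      using that by (intro sum.cong) (auto simp: elementary_dependence_free_point)
    then show ?thesis using that finite_free_points by (simp add: w_def)
  qed
  ultimately have "w v = 0" by (rule affine_dependence_eq_0)
  then show ?thesis by (simp add: w_def)
qed

definition enum_free :: "nat \<Rightarrow> 'a" where
  "enum_free = (SOME h. bij_betw h {..<card free_points} free_points)"

definition dependence_of :: "(nat \<Rightarrow> real) \<Rightarrow> 'a \<Rightarrow> real" where
  "dependence_of z v = (\<Sum>i<card free_points. z i * elementary_dependence (enum_free i) v)"

definition coordinates :: "('a \<Rightarrow> real) \<Rightarrow> nat \<Rightarrow> real" where
  "coordinates u i = (if i < card free_points then u (enum_free i) else 0)"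

lemma bij_enum_free: "bij_betw enum_free {..<card free_points} free_points"
  using someI_ex[OF ex_bij_betw_nat_finite[OF finite_free_points]]
  unfolding enum_free_def[symmetric] atLeast0LessThan .

lemma enum_free_in: "i < card free_points \<Longrightarrow> enum_free i \<in> free_points"
  using bij_enum_free by (auto simp: bij_betw_def)

lemma dependence_of_in: "dependence_of z \<in> affine_dependences"
  unfolding dependence_of_def[abs_def]
  by (intro affine_dependences_lincomb) (auto intro: elementary_dependence enum_free_in)

lemma dependence_of_enum_free:
  assumes "j < card free_points"
  shows "dependence_of z (enum_free j) = z j"
proof -
  have "dependence_of z (enum_free j) = (\<Sum>i<card free_points. if i = j then z i else 0)"
    unfolding dependence_of_def
  proof (rule sum.cong[OF refl])
    fix i assume "i \<in> {..<card free_points}"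
    then show "z i * elementary_dependence (enum_free i) (enum_free j) = (if i = j then z i else 0)"
      using elementary_dependence_free_point[OF enum_free_in enum_free_in] assms
        bij_betw_imp_inj_on[OF bij_enum_free]
      by (auto simp: inj_on_def)
  qed
  also have "\<dots> = z j" using assms by simp
  finally show ?thesis .
qed

lemma dependence_of_coordinates:
  assumes u: "u \<in> affine_dependences"
  shows "dependence_of (coordinates u) = u"
proof
  fix v
  have "dependence_of (coordinates u) v = (\<Sum>f\<in>free_points. u f * elementary_dependence f v)"
    unfolding dependence_of_def coordinates_def
    using sum.reindex_bij_betw[OF bij_enum_free, of "\<lambda>f. u f * elementary_dependence f v"] by simp
  also have "\<dots> = u v" by (rule affine_dependence_expansion[OF u, symmetric])
  finally show "dependence_of (coordinates u) v = u v" .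
qed

lemma card_affine_frame: "int (card affine_frame) = aff_dim (convex hull V) + 1"
proof -
  have "aff_dim (convex hull V) = aff_dim (affine hull V)" by (simp add: aff_dim_convex_hull)
  also have "\<dots> = aff_dim (affine hull affine_frame)" by (simp only: affine_frame(3))
  finally show ?thesis
    using aff_dim_affine_independent[OF affine_frame(2)] by simp
qed

lemma card_free_points: "card free_points = card V - card affine_frame"
  unfolding free_points_def using card_Diff_subset[OF finite_affine_frame affine_frame(1)] .

end

locale interior_point_configuration = point_configuration +
  assumes r_rel_interior: "r \<in> rel_interior (convex hull V)"
begin

definition center :: "'a \<Rightarrow> real" where
  "center = (SOME c. c \<in> balancing_weights \<and> sum c V = 1 \<and> {v. c v \<noteq> 0} = V)"

lemma center: "center \<in> balancing_weights" "sum center V = 1" "v \<in> V \<Longrightarrow> 0 < center v"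
proof -
  have "\<exists>c. c \<in> balancing_weights \<and> sum c V = 1 \<and> {v. c v \<noteq> 0} = V"
    using rel_interior_hull_iff_balancing_support r_rel_interior by blast
  from someI_ex[OF this]
  have c: "center \<in> balancing_weights" "sum center V = 1" "{v. center v \<noteq> 0} = V"
    unfolding center_def[symmetric] by auto
  then show "center \<in> balancing_weights" "sum center V = 1" by simp_all
  show "v \<in> V \<Longrightarrow> 0 < center v"
    using c(3) balancing_weights_nonneg[OF c(1), of v] by (auto simp: less_le)
qed

lemma V_nonempty: "V \<noteq> {}"
  using center(2) by auto

lemma balancing_weights_minus_center:
  assumes "p \<in> balancing_weights" "sum p V = 1"
  shows "(\<lambda>v. p v - center v) \<in> affine_dependences"
  using assms center(1,2) balancing_weights_barycenter[OF assms(1)] balancing_weights_barycenter[OF center(1)]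
  by (auto simp: affine_dependences_def sum_subtractf scaleR_diff_left balancing_weights_outside)

text \<open>\<open>center + w\<close> lies in the polytope of normalised balancing weights iff \<open>weight_gauge w \<le> 1\<close>,
  and on its boundary iff \<open>weight_gauge w = 1\<close>.\<close>

definition weight_gauge :: "('a \<Rightarrow> real) \<Rightarrow> real" where
  "weight_gauge w = Max ((\<lambda>v. - w v / center v) ` V)"

lemma weight_gauge_ge: "v \<in> V \<Longrightarrow> - w v / center v \<le> weight_gauge w"
  unfolding weight_gauge_def using finite_V by (intro Max_ge) auto

lemma weight_gauge_attained: "\<exists>v\<in>V. weight_gauge w = - w v / center v"
proof -
  have "weight_gauge w \<in> (\<lambda>v. - w v / center v) ` V"
    unfolding weight_gauge_def using finite_V V_nonempty by (intro Max_in) auto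
  then show ?thesis by auto
qed

lemma weight_gauge_pos:
  assumes w: "w \<in> affine_dependences" and "w v0 \<noteq> 0"
  shows "0 < weight_gauge w"
proof -
  have "v0 \<in> V" using assms by (auto simp: affine_dependences_def)
  have "\<exists>v\<in>V. w v < 0"
  proof (rule ccontr)
    assume "\<not> (\<exists>v\<in>V. w v < 0)"
    then have nonneg: "\<And>v. v \<in> V \<Longrightarrow> 0 \<le> w v" by (simp add: not_less)
    have "sum w V = 0" using w by (simp add: affine_dependences_def)
    then have "\<forall>v\<in>V. w v = 0" using sum_nonneg_eq_0_iff[OF finite_V nonneg] by simp
    with \<open>v0 \<in> V\<close> \<open>w v0 \<noteq> 0\<close> show False by blast
  qed
  then obtain v where v: "v \<in> V" "w v < 0" by blast
  have "0 < - w v / center v" using v center(3)[OF v(1)] by (simp add: divide_neg_pos)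
  also have "\<dots> \<le> weight_gauge w" by (rule weight_gauge_ge[OF v(1)])
  finally show ?thesis .
qed

lemma weight_gauge_divide:
  assumes "0 < s"
  shows "weight_gauge (\<lambda>v. w v / s) = weight_gauge w / s"
proof -
  have "mono (\<lambda>x::real. x / s)" using assms by (intro monoI) (simp add: divide_right_mono)
  then have "weight_gauge w / s = Max ((\<lambda>x. x / s) ` (\<lambda>v. - w v / center v) ` V)"
    unfolding weight_gauge_def using finite_V V_nonempty by (intro mono_Max_commute) auto
  also have "(\<lambda>x. x / s) ` (\<lambda>v. - w v / center v) ` V = (\<lambda>v. - (w v / s) / center v) ` V"
    by (simp add: image_image mult.commute)
  finally show ?thesis by (simp add: weight_gauge_def)
qed

lemma weight_gauge_boundary_weights:
  assumes p: "p \<in> boundary_weights"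
  shows "weight_gauge (\<lambda>v. p v - center v) = 1"
proof -
  have pw: "p \<in> balancing_weights" and "\<exists>v\<in>V. p v = 0"
    using p by (auto simp: boundary_weights_def)
  then obtain v0 where v0: "v0 \<in> V" "p v0 = 0" by blast
  show ?thesis
    unfolding weight_gauge_def
  proof (rule Max_eqI)
    show "finite ((\<lambda>v. - (p v - center v) / center v) ` V)" using finite_V by simp
    show "y \<le> 1" if "y \<in> (\<lambda>v. - (p v - center v) / center v) ` V" for y
      using that center(3) balancing_weights_nonneg[OF pw] by (auto simp: divide_le_eq)
    show "1 \<in> (\<lambda>v. - (p v - center v) / center v) ` V"
      using v0 center(3)[OF v0(1)] by (intro image_eqI[of _ _ v0]) auto
  qed
qed

lemma boundary_weightsI:
  assumes w: "(\<lambda>v. p v - center v) \<in> affine_dependences"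
    and g: "weight_gauge (\<lambda>v. p v - center v) = 1"
  shows "p \<in> boundary_weights"
proof -
  have sums: "sum p V = 1" "(\<Sum>v\<in>V. p v *\<^sub>R v) = r"
    using w center(1,2) balancing_weights_barycenter[OF center(1)]
    by (auto simp: affine_dependences_def sum_subtractf scaleR_diff_left)
  have outside: "p v = 0" if "v \<notin> V" for v
    using that w balancing_weights_outside[OF center(1)] by (simp add: affine_dependences_def)
  have "0 \<le> p v" for v
    using weight_gauge_ge[of v "\<lambda>v. p v - center v"] g center(3)[of v] outside[of v]
    by (cases "v \<in> V") (simp_all add: divide_le_eq)
  then have "p \<in> balancing_weights"
    using outside sums by (intro balancing_weightsI) simp_all
  moreover obtain v where "v \<in> V" "weight_gauge (\<lambda>v. p v - center v) = - (p v - center v) / center v"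
    using weight_gauge_attained by blast
  then have "v \<in> V" "p v = 0" using g center(3) by (auto simp: field_simps)
  ultimately show ?thesis using sums by (auto simp: boundary_weights_def)
qed

lemma boundary_weights_iff:
  "p \<in> boundary_weights \<longleftrightarrow>
    (\<lambda>v. p v - center v) \<in> affine_dependences \<and> weight_gauge (\<lambda>v. p v - center v) = 1"
  using boundary_weightsI weight_gauge_boundary_weights balancing_weights_minus_center
  by (auto simp: boundary_weights_def)

definition sphere_dim :: nat where
  "sphere_dim = card free_points - 1"

definition coordinate_norm :: "(nat \<Rightarrow> real) \<Rightarrow> real" where
  "coordinate_norm z = sqrt (\<Sum>i<card free_points. (z i)\<^sup>2)"

definition sphere_to_boundary :: "(nat \<Rightarrow> real) \<Rightarrow> 'a \<Rightarrow> real" where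
  "sphere_to_boundary z v = center v + dependence_of z v / weight_gauge (dependence_of z)"

definition boundary_to_sphere :: "('a \<Rightarrow> real) \<Rightarrow> nat \<Rightarrow> real" where
  "boundary_to_sphere p i =
    coordinates (\<lambda>v. p v - center v) i / coordinate_norm (coordinates (\<lambda>v. p v - center v))"

context
  assumes free_points_ne: "free_points \<noteq> {}"
begin

lemma topspace_nsphere_sphere_dim:
  "topspace (nsphere sphere_dim) =
    {z. (\<Sum>i<card free_points. (z i)\<^sup>2) = 1 \<and> (\<forall>i\<ge>card free_points. z i = 0)}"
proof -
  have "card free_points > 0" using free_points_ne finite_free_points card_gt_0_iff by blast
  then have "{..sphere_dim} = {..<card free_points}" "(i > sphere_dim) = (i \<ge> card free_points)" for i
    by (auto simp: sphere_dim_def)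
  then show ?thesis by (simp add: nsphere)
qed

lemma nsphere_nonzero_coordinate:
  assumes "z \<in> topspace (nsphere sphere_dim)"
  obtains j where "j < card free_points" "z j \<noteq> 0"
proof (rule ccontr)
  assume "\<not> thesis"
  then have "\<forall>j<card free_points. z j = 0" using that by blast
  then have "(\<Sum>i<card free_points. (z i)\<^sup>2) = 0" by simp
  then show False using assms by (simp add: topspace_nsphere_sphere_dim)
qed

lemma weight_gauge_dependence_of_pos:
  assumes "z \<in> topspace (nsphere sphere_dim)"
  shows "0 < weight_gauge (dependence_of z)"
proof -
  obtain j where "j < card free_points" "z j \<noteq> 0" using nsphere_nonzero_coordinate[OF assms] .
  then show ?thesis
    using weight_gauge_pos[OF dependence_of_in, of z "enum_free j"] dependence_of_enum_free by simp
qed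

lemma coordinate_norm_pos:
  assumes p: "p \<in> boundary_weights"
  shows "0 < coordinate_norm (coordinates (\<lambda>v. p v - center v))"
proof -
  let ?u = "\<lambda>v. p v - center v"
  have u: "?u \<in> affine_dependences" using p boundary_weights_iff by blast
  obtain v where v: "v \<in> V" "p v = 0" using p by (auto simp: boundary_weights_def)
  have "\<exists>f\<in>free_points. ?u f \<noteq> 0"
    using affine_dependence_eq_0[OF u, of v] v center(3)[OF v(1)] by auto
  then obtain i where "i < card free_points" "?u (enum_free i) \<noteq> 0"
    using bij_enum_free by (force simp: bij_betw_def)
  then have "0 < (\<Sum>i<card free_points. (coordinates ?u i)\<^sup>2)"
    by (intro sum_pos2[of _ i]) (auto simp: coordinates_def)
  then show ?thesis by (simp add: coordinate_norm_def)
qed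

lemma sphere_to_boundary_in:
  assumes z: "z \<in> topspace (nsphere sphere_dim)"
  shows "sphere_to_boundary z \<in> boundary_weights"
  using weight_gauge_dependence_of_pos[OF z] weight_gauge_divide[of _ "dependence_of z"]
  by (simp add: boundary_weights_iff sphere_to_boundary_def affine_dependences_divide dependence_of_in)

lemma boundary_to_sphere_in:
  assumes p: "p \<in> boundary_weights"
  shows "boundary_to_sphere p \<in> topspace (nsphere sphere_dim)"
proof -
  let ?z = "coordinates (\<lambda>v. p v - center v)"
  have square: "(\<Sum>i<card free_points. (?z i)\<^sup>2) = (coordinate_norm ?z)\<^sup>2"
    unfolding coordinate_norm_def by (intro real_sqrt_pow2[symmetric] sum_nonneg) auto
  have "(\<Sum>i<card free_points. (boundary_to_sphere p i)\<^sup>2) = (\<Sum>i<card free_points. (?z i)\<^sup>2) / (coordinate_norm ?z)\<^sup>2"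
    by (simp add: boundary_to_sphere_def power_divide sum_divide_distrib)
  also have "\<dots> = 1"
    unfolding square using coordinate_norm_pos[OF p] by simp
  finally have "(\<Sum>i<card free_points. (boundary_to_sphere p i)\<^sup>2) = 1" .
  then show ?thesis
    by (simp add: topspace_nsphere_sphere_dim boundary_to_sphere_def coordinates_def)
qed

lemma boundary_to_sphere_to_boundary:
  assumes z: "z \<in> topspace (nsphere sphere_dim)"
  shows "boundary_to_sphere (sphere_to_boundary z) = z"
proof
  fix i
  define g where "g = weight_gauge (dependence_of z)"
  have g: "0 < g" unfolding g_def by (rule weight_gauge_dependence_of_pos[OF z])
  have coords: "coordinates (\<lambda>v. sphere_to_boundary z v - center v) = (\<lambda>i. z i / g)"
    using z by (auto simp: coordinates_def sphere_to_boundary_def dependence_of_enum_free g_def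
        topspace_nsphere_sphere_dim)
  have "(\<Sum>i<card free_points. (z i / g)\<^sup>2) = 1 / g\<^sup>2"
    using z by (simp add: power_divide topspace_nsphere_sphere_dim flip: sum_divide_distrib)
  then have "coordinate_norm (\<lambda>i. z i / g) = 1 / g"
    using g by (simp add: coordinate_norm_def real_sqrt_divide)
  then show "boundary_to_sphere (sphere_to_boundary z) i = z i"
    using g by (simp add: boundary_to_sphere_def coords)
qed

lemma sphere_to_boundary_to_sphere:
  assumes p: "p \<in> boundary_weights"
  shows "sphere_to_boundary (boundary_to_sphere p) = p"
proof
  fix v
  let ?u = "\<lambda>v. p v - center v"
  define s where "s = coordinate_norm (coordinates ?u)"
  have s: "0 < s" unfolding s_def by (rule coordinate_norm_pos[OF p])
  have u: "?u \<in> affine_dependences" "weight_gauge ?u = 1" using p boundary_weights_iff by blast+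
  have "boundary_to_sphere p = (\<lambda>i. coordinates ?u i / s)"
    by (simp add: boundary_to_sphere_def s_def fun_eq_iff)
  then have "dependence_of (boundary_to_sphere p) = (\<lambda>w. ?u w / s)"
    using dependence_of_coordinates[OF u(1)]
    by (simp add: dependence_of_def fun_eq_iff flip: sum_divide_distrib)
  then show "sphere_to_boundary (boundary_to_sphere p) v = p v"
    using s u(2) weight_gauge_divide[OF s, of ?u] by (simp add: sphere_to_boundary_def)
qed

lemma continuous_map_sphere_to_boundary:
  "continuous_map (nsphere sphere_dim) (subtopology (powertop_real UNIV) boundary_weights)
     sphere_to_boundary"
  unfolding continuous_map_in_subtopology
proof
  have dependence: "continuous_map (nsphere sphere_dim) euclideanreal (\<lambda>z. dependence_of z w)" for w
    unfolding dependence_of_def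
    by (intro continuous_map_sum continuous_map_real_mult continuous_map_nsphere_projection
        continuous_map_canonical_const) auto
  have gauge: "continuous_map (nsphere sphere_dim) euclideanreal (\<lambda>z. weight_gauge (dependence_of z))"
    unfolding weight_gauge_def
    by (rule continuous_map_Max[OF finite_V V_nonempty])
      (intro continuous_map_real_divide continuous_map_minus dependence continuous_map_canonical_const,
       use center(3) in force)
  show "continuous_map (nsphere sphere_dim) (powertop_real UNIV) sphere_to_boundary"
    unfolding continuous_map_componentwise_UNIV sphere_to_boundary_def
    using weight_gauge_dependence_of_pos
    by (intro allI continuous_map_add continuous_map_canonical_const continuous_map_real_divide
        dependence gauge) force
  show "sphere_to_boundary \<in> topspace (nsphere sphere_dim) \<rightarrow> boundary_weights"
    using sphere_to_boundary_in by blast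
qed

lemma continuous_map_boundary_to_sphere:
  "continuous_map (subtopology (powertop_real UNIV) boundary_weights) (nsphere sphere_dim)
     boundary_to_sphere"
proof -
  let ?Y = "subtopology (powertop_real UNIV) boundary_weights"
  have coordinate: "continuous_map ?Y euclideanreal (\<lambda>p. coordinates (\<lambda>v. p v - center v) i)" for i
    unfolding coordinates_def
    by (cases "i < card free_points")
       (simp_all add: continuous_map_diff continuous_map_product_coordinate)
  have norm: "continuous_map ?Y euclideanreal (\<lambda>p. coordinate_norm (coordinates (\<lambda>v. p v - center v)))"
    unfolding coordinate_norm_def
    by (intro continuous_map_sqrt continuous_map_sum continuous_map_real_pow coordinate) auto
  have "continuous_map ?Y (powertop_real UNIV) boundary_to_sphere"
    unfolding continuous_map_componentwise_UNIV boundary_to_sphere_def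
    using coordinate_norm_pos
    by (intro allI continuous_map_real_divide coordinate norm) force
  then show ?thesis
    using boundary_to_sphere_in by (simp add: nsphere continuous_map_in_subtopology Pi_iff)
qed

theorem boundary_weights_homeomorphic_nsphere:
  "subtopology (powertop_real UNIV) boundary_weights homeomorphic_space nsphere sphere_dim"
proof -
  have "homeomorphic_maps (nsphere sphere_dim) (subtopology (powertop_real UNIV) boundary_weights)
      sphere_to_boundary boundary_to_sphere"
    unfolding homeomorphic_maps_def
    using continuous_map_sphere_to_boundary continuous_map_boundary_to_sphere
      boundary_to_sphere_to_boundary sphere_to_boundary_to_sphere by auto
  then show ?thesis
    using homeomorphic_maps_imp_homeomorphic_space homeomorphic_space_sym by blast
qed

end

lemma free_points_nonempty:
  assumes "weakly_balanced \<noteq> {}"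
  shows "free_points \<noteq> {}"
proof
  assume no_free: "free_points = {}"
  obtain S where S: "S \<in> weakly_balanced" using assms by blast
  then obtain l where l: "l \<in> balancing_weights" "sum l V = 1" "{v. l v \<noteq> 0} \<subseteq> S"
    by (auto simp: weakly_balanced_iff)
  obtain w where w: "w \<in> V" "w \<notin> S" using S by (auto simp: weakly_balanced_iff)
  have "l w - center w = 0"
    using affine_dependence_eq_0[OF balancing_weights_minus_center[OF l(1,2)]] no_free by simp
  moreover have "l w = 0" using w l(3) by auto
  ultimately show False using center(3)[OF w(1)] by simp
qed

end

theorem theorem2:
  fixes V :: "(real ^ 'd) set" and r :: "real ^ 'd" and m k :: nat
  assumes "finite V" and "card V = m"
    and "weakly_balanced_poset V r \<noteq> {}"
    and "r \<in> rel_interior (convex hull V)"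
    and "aff_dim (convex hull V) = int k"
  shows "order_complex_realization (weakly_balanced_poset V r)
           homotopy_equivalent_space order_complex_realization (balanced_poset V r)
       \<and> order_complex_realization (balanced_poset V r)
           homotopy_equivalent_space nsphere (m - k - 2)"
proof -
  interpret interior_point_configuration V r
    by unfold_locales (use assms in auto)
  have free: "free_points \<noteq> {}" by (rule free_points_nonempty[OF assms(3)])
  have "sphere_dim = m - k - 2"
    using card_affine_frame card_free_points assms(2,5) by (simp add: sphere_dim_def)
  have "order_complex_realization balanced
      homeomorphic_space subtopology (powertop_real UNIV) boundary_weights"
    by (rule homeomorphic_map_imp_homeomorphic_space[OF homeomorphic_map_combine])
  also have "\<dots> homeomorphic_space nsphere (m - k - 2)"
    using boundary_weights_homeomorphic_nsphere[OF free] \<open>sphere_dim = m - k - 2\<close> by simp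
  finally show ?thesis
    using homotopy_equivalent_weakly_balanced_balanced homeomorphic_imp_homotopy_equivalent_space
    by blast
qed

end
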